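(* Let $N\ge 1$ be an integer, let $T=\tau_N>\tau_{N-1}>\cdots>\tau_1>0$ be a decreasing sequence of positive noise levels, let $\eta\in[0,1]$, let $\xi\in\{-1,1\}$, and fix $\mathbf{x}_0\in\mathbb{R}^d$. Consider the joint distribution of $(\mathbf{x}_{\tau_1},\dots,\mathbf{x}_{\tau_N})$ given $\mathbf{x}_0$ defined by $$q_{\eta}(\mathbf{x}_{\tau_1:\tau_N}\mid \mathbf{x}_0)=q_{\eta}(\mathbf{x}_{\tau_N}\mid\mathbf{x}_0)\prod_{n=2}^{N} q_{\eta}(\mathbf{x}_{\tau_{n-1}}\mid \mathbf{x}_{\tau_n},\mathbf{x}_0),$$ where $q_{\eta}(\mathbf{x}_{\tau_N}\mid\mathbf{x}_0)=\mathcal{N}(\mathbf{x}_0,\tau_N^2\mathbf{I})$ and, for every $n\in\{2,\dots,N\}$, $$q_{\eta}(\mathbf{x}_{\tau_{n-1}}\mid \mathbf{x}_{\tau_n},\mathbf{x}_0)=\mathcal{N}\!\left(\mathbf{x}_0+\xi\sqrt{1-\eta^2}\,\tau_{n-1}\,\frac{\mathbf{x}_0-\mathbf{x}_{\tau_n}}{\tau_n},\ \eta^2\tau_{n-1}^2\mathbf{I}\right).$$ Then for every $n\in\{1,\dots,N\}$ the marginal satisfies $q_{\eta}(\mathbf{x}_{\tau_n}\mid\mathbf{x}_0)=\mathcal{N}(\mathbf{x}_0,\tau_n^2\mathbf{I})$. In particular this holds both for $\xi=-1$ (the DDIM choice, with mean $\mathbf{x}_0+\sqrt{1-\eta^2}\tau_{n-1}(\mathbf{x}_{\tau_n}-\mathbf{x}_0)/\tau_n$)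 and for $\xi=1$ (the sign-flipped choice, with mean $\mathbf{x}_0+\sqrt{1-\eta^2}\tau_{n-1}(\mathbf{x}_0-\mathbf{x}_{\tau_n})/\tau_n$).
   Context: $\mathcal{N}(\boldsymbol{\mu},\boldsymbol{\Sigma})$ denotes the multivariate Gaussian distribution on $\mathbb{R}^d$ with mean $\boldsymbol{\mu}$ and covariance $\boldsymbol{\Sigma}$, and $\mathbf{I}$ is the $d\times d$ identity matrix. The marginal $q_{\eta}(\mathbf{x}_{\tau_n}\mid\mathbf{x}_0)$ is the distribution of $\mathbf{x}_{\tau_n}$ under the joint distribution $q_{\eta}(\mathbf{x}_{\tau_1:\tau_N}\mid\mathbf{x}_0)$. *)

theory Defs
  imports "HOL-Probability.Probability"
begin

text \<open>Vectors in R^d are functions from a finite index type 'd to real.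
  The Borel measurable space of R^d is the finite product of Borel lines.\<close>

definition vec_space :: "('d::finite \<Rightarrow> real) measure" where
  "vec_space = PiM UNIV (\<lambda>_. borel)"

definition normal1 :: "real \<Rightarrow> real \<Rightarrow> real measure" where
  "normal1 m s = (if s = 0 then return borel m else density lborel (normal_density m s))"

definition gauss :: "('d::finite \<Rightarrow> real) \<Rightarrow> real \<Rightarrow> ('d \<Rightarrow> real) measure" where
  "gauss mu s = PiM UNIV (\<lambda>i. normal1 (mu i) s)"

definition step_kernel ::
  "('d::finite \<Rightarrow> real) \<Rightarrow> real \<Rightarrow> real \<Rightarrow> (nat \<Rightarrow> real) \<Rightarrow> nat \<Rightarrow> ('d \<Rightarrow> real) \<Rightarrow> ('d \<Rightarrow> real) measure" where
  "step_kernel x0 eta xi tau n x =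
     gauss (\<lambda>i. x0 i + xi * sqrt (1 - eta\<^sup>2) * tau (n - 1) * (x0 i - x i) / tau n) (eta * tau (n - 1))"

text \<open>Path space for the variables with indices in K (an extensional function K -> R^d).\<close>

definition path_space :: "nat set \<Rightarrow> (nat \<Rightarrow> ('d::finite \<Rightarrow> real)) measure" where
  "path_space K = PiM K (\<lambda>_. vec_space)"

text \<open>Partial joint law of (x_{tau_{N-j}}, ..., x_{tau_N}) given x_0, built as
  q(x_{tau_N}|x_0) followed by j transitions.\<close>

fun partial_joint ::
  "('d::finite \<Rightarrow> real) \<Rightarrow> real \<Rightarrow> real \<Rightarrow> (nat \<Rightarrow> real) \<Rightarrow> nat \<Rightarrow> nat \<Rightarrow> (nat \<Rightarrow> ('d \<Rightarrow> real)) measure" where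
  "partial_joint x0 eta xi tau N 0 =
     distr (gauss x0 (tau N)) (path_space {N..N}) (\<lambda>y n. if n = N then y else undefined)"
| "partial_joint x0 eta xi tau N (Suc j) =
     partial_joint x0 eta xi tau N j \<bind>
       (\<lambda>\<omega>. distr (step_kernel x0 eta xi tau (N - j) (\<omega> (N - j)))
                  (path_space {N - Suc j..N}) (\<lambda>y. fun_upd \<omega> (N - Suc j) y))"

definition joint :: "('d::finite \<Rightarrow> real) \<Rightarrow> real \<Rightarrow> real \<Rightarrow> (nat \<Rightarrow> real) \<Rightarrow> nat \<Rightarrow> (nat \<Rightarrow> ('d \<Rightarrow> real)) measure" where
  "joint x0 eta xi tau N = partial_joint x0 eta xi tau N (N - 1)"

definition marginal :: "('d::finite \<Rightarrow> real) \<Rightarrow> real \<Rightarrow> real \<Rightarrow> (nat \<Rightarrow> real) \<Rightarrow> nat \<Rightarrow> nat \<Rightarrow> ('d \<Rightarrow> real) measure" where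
  "marginal x0 eta xi tau N n = distr (joint x0 eta xi tau N) vec_space (\<lambda>\<omega>. \<omega> n)"

end

theory Submission
  imports Defs
begin

(* Each transition is a linear Gaussian kernel x \<mapsto> N(x0 + c (x0 - x), s^2 I) with
   c = xi sqrt(1 - eta^2) tau_(n-1) / tau_n and s = eta tau_(n-1).  Feeding it x ~ N(x0, tau_n^2 I)
   yields, coordinatewise, x0 - c tau_n Z + s W with Z, W independent standard normals, i.e.
   N(x0, ((c tau_n)^2 + s^2) I) = N(x0, tau_(n-1)^2 I): the sign xi only enters through xi^2 = 1.
   Appending x_(tau_(n-1)) to the path leaves the laws of the later variables unchanged, so
   induction down the chain gives every marginal. *)

lemma (in pair_prob_space) distr_pair_measure_eq_bind:
  assumes f [measurable]: "f \<in> M1 \<Otimes>\<^sub>M M2 \<rightarrow>\<^sub>M N"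
  shows "distr (M1 \<Otimes>\<^sub>M M2) N f = M1 \<bind> (\<lambda>x. distr M2 N (\<lambda>y. f (x, y)))"
proof -
  note return_measurable [measurable]
  have "distr (M1 \<Otimes>\<^sub>M M2) N f = (M1 \<Otimes>\<^sub>M M2) \<bind> (\<lambda>p. return N (f p))"
    by (simp add: bind_return_distr' M1.not_empty M2.not_empty space_pair_measure)
  also have "\<dots> = M1 \<bind> (\<lambda>x. M2 \<bind> (\<lambda>y. return (M1 \<Otimes>\<^sub>M M2) (x, y))) \<bind> (\<lambda>p. return N (f p))"
    by (simp flip: pair_measure_eq_bind)
  also have "\<dots> = M1 \<bind> (\<lambda>x. M2 \<bind> (\<lambda>y. return N (f (x, y))))"
    by (auto intro!: bind_cong simp: bind_assoc[where N="M1 \<Otimes>\<^sub>M M2" and R=N] bind_return[where N=N]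
        space_pair_measure)
  also have "\<dots> = M1 \<bind> (\<lambda>x. distr M2 N (\<lambda>y. f (x, y)))"
    by (intro bind_cong bind_return_distr') (auto simp: M2.not_empty)
  finally show ?thesis .
qed

lemma (in pair_prob_space) distr_pair_snd: "distr (M1 \<Otimes>\<^sub>M M2) M2 snd = M2"
proof -
  have "distr (M1 \<Otimes>\<^sub>M M2) M2 snd = distr (M2 \<Otimes>\<^sub>M M1) M2 (snd \<circ> (\<lambda>(x, y). (y, x)))"
    by (subst distr_pair_swap) (simp add: distr_distr)
  also have "\<dots> = M2"
    by (simp add: comp_def split_beta' M1.distr_pair_fst)
  finally show ?thesis .
qed

lemma indep_var_fst_snd:
  fixes M1 M2 :: "'a measure"
  assumes "prob_space M1" and "prob_space M2"
  shows "prob_space.indep_var (M1 \<Otimes>\<^sub>M M2) M1 fst M2 snd"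
proof -
  interpret pair_prob_space M1 M2
    using assms by (simp add: pair_prob_space_def pair_sigma_finite_def prob_space_imp_sigma_finite)
  show ?thesis
    by (simp add: indep_var_distribution_eq M2.distr_pair_fst distr_pair_snd distr_id2)
qed

lemma
  fixes K :: "'i::finite \<Rightarrow> 'a \<Rightarrow> 'b measure"
  assumes K: "\<And>i. K i \<in> M i \<rightarrow>\<^sub>M prob_algebra (N i)" and x: "x \<in> space (PiM UNIV M)"
  shows prob_space_PiM_kernel: "prob_space (PiM UNIV (\<lambda>i. K i (x i)))"
    and sets_PiM_kernel: "sets (PiM UNIV (\<lambda>i. K i (x i))) = sets (PiM UNIV N)"
    and emeasure_PiM_kernel:
      "(\<And>i. E i \<in> sets (N i)) \<Longrightarrow>
         emeasure (PiM UNIV (\<lambda>i. K i (x i))) (Pi\<^sub>E UNIV E) = (\<Prod>i\<in>UNIV. emeasure (K i (x i)) (E i))"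
proof -
  have prob: "prob_space (K i (x i))" and sets: "sets (K i (x i)) = sets (N i)" for i
    using measurable_space[OF K] x by (auto simp: space_PiM space_prob_algebra)
  then interpret product_sigma_finite "\<lambda>i. K i (x i)"
    by (auto simp: product_sigma_finite_def intro: prob_space_imp_sigma_finite)
  show "prob_space (PiM UNIV (\<lambda>i. K i (x i)))"
    using prob by (rule prob_space_PiM)
  show "sets (PiM UNIV (\<lambda>i. K i (x i))) = sets (PiM UNIV N)"
    using sets by (rule sets_PiM_cong[OF refl])
  show "emeasure (PiM UNIV (\<lambda>i. K i (x i))) (Pi\<^sub>E UNIV E) = (\<Prod>i\<in>UNIV. emeasure (K i (x i)) (E i))"
    if "\<And>i. E i \<in> sets (N i)"
    using that by (simp add: emeasure_PiM sets)
qed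

lemma measurable_PiM_kernel:
  fixes K :: "'i::finite \<Rightarrow> 'a \<Rightarrow> 'b measure"
  assumes K: "\<And>i. K i \<in> M i \<rightarrow>\<^sub>M prob_algebra (N i)"
  shows "(\<lambda>x. PiM UNIV (\<lambda>i. K i (x i))) \<in> PiM UNIV M \<rightarrow>\<^sub>M prob_algebra (PiM UNIV N)"
proof (rule measurable_prob_algebra_generated[OF sets_PiM Int_stable_prod_algebra prod_algebra_sets_into_space])
  fix A assume "A \<in> prod_algebra UNIV N"
  then obtain E where A: "A = Pi\<^sub>E UNIV E" and E: "\<And>i. E i \<in> sets (N i)"
    by (metis prod_algebraE_all PiE UNIV_I)
  have "(\<lambda>y. emeasure (K i y) (E i)) \<in> borel_measurable (M i)" for i
    using E by (intro measurable_compose[OF measurable_prob_algebraD[OF K]] measurable_emeasure_subprob_algebra)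
  then have "(\<lambda>x. \<Prod>i\<in>UNIV. emeasure (K i (x i)) (E i)) \<in> borel_measurable (PiM UNIV M)"
    by (auto intro!: borel_measurable_prod_ennreal measurable_compose[OF measurable_component_singleton])
  then show "(\<lambda>x. emeasure (PiM UNIV (\<lambda>i. K i (x i))) A) \<in> borel_measurable (PiM UNIV M)"
    by (simp add: A emeasure_PiM_kernel[OF K _ E] cong: measurable_cong)
qed (simp_all add: prob_space_PiM_kernel[of K M N] sets_PiM_kernel[of K M N] K)

lemma bind_PiM_kernel:
  fixes K :: "'i::finite \<Rightarrow> 'a \<Rightarrow> 'b measure"
  assumes M: "\<And>i. prob_space (M i)" and K: "\<And>i. K i \<in> M i \<rightarrow>\<^sub>M prob_algebra (N i)"
  shows "PiM UNIV M \<bind> (\<lambda>x. PiM UNIV (\<lambda>i. K i (x i))) = PiM UNIV (\<lambda>i. M i \<bind> K i)"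
proof -
  have M_space: "M i \<in> space (prob_algebra (M i))" for i
    using M by (simp add: space_prob_algebra)
  have PiM_space: "PiM UNIV M \<in> space (prob_algebra (PiM UNIV M))"
    using M by (simp add: space_prob_algebra prob_space_PiM)
  have sets_MK: "sets (M i \<bind> K i) = sets (N i)" for i
    by (rule sets_bind'[OF M_space K])
  interpret MK: product_sigma_finite "\<lambda>i. M i \<bind> K i"
    by (auto simp: product_sigma_finite_def intro: prob_space_imp_sigma_finite prob_space_bind'[OF M_space K])
  interpret M: product_sigma_finite M
    by (auto simp: product_sigma_finite_def intro: prob_space_imp_sigma_finite M)
  show ?thesis
  proof (rule MK.PiM_eqI)
    show "sets (PiM UNIV M \<bind> (\<lambda>x. PiM UNIV (\<lambda>i. K i (x i)))) = sets (PiM UNIV (\<lambda>i. M i \<bind> K i))"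
      by (simp add: sets_bind'[OF PiM_space measurable_PiM_kernel[OF K]] sets_MK cong: sets_PiM_cong)
  next
    fix A assume A: "\<And>i. i \<in> UNIV \<Longrightarrow> A i \<in> sets (M i \<bind> K i)"
    then have A': "A i \<in> sets (N i)" for i
      by (simp add: sets_MK)
    have "emeasure (PiM UNIV M \<bind> (\<lambda>x. PiM UNIV (\<lambda>i. K i (x i)))) (Pi\<^sub>E UNIV A)
        = \<integral>\<^sup>+x. emeasure (PiM UNIV (\<lambda>i. K i (x i))) (Pi\<^sub>E UNIV A) \<partial>PiM UNIV M"
      using A' by (intro emeasure_bind_prob_algebra[OF PiM_space measurable_PiM_kernel[OF K]] sets_PiM_I_finite) auto
    also have "\<dots> = \<integral>\<^sup>+x. (\<Prod>i\<in>UNIV. emeasure (K i (x i)) (A i)) \<partial>PiM UNIV M"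
      using A' by (intro nn_integral_cong emeasure_PiM_kernel[OF K])
    also have "\<dots> = (\<Prod>i\<in>UNIV. \<integral>\<^sup>+y. emeasure (K i y) (A i) \<partial>M i)"
      using A' by (intro M.product_nn_integral_prod measurable_compose[OF measurable_prob_algebraD[OF K]]
          measurable_emeasure_subprob_algebra) auto
    also have "\<dots> = (\<Prod>i\<in>UNIV. emeasure (M i \<bind> K i) (A i))"
      using A' by (intro prod.cong refl emeasure_bind_prob_algebra[OF M_space K, symmetric])
    finally show "emeasure (PiM UNIV M \<bind> (\<lambda>x. PiM UNIV (\<lambda>i. K i (x i)))) (Pi\<^sub>E UNIV A)
        = (\<Prod>i\<in>UNIV. emeasure (M i \<bind> K i) (A i))" .
  qed simp
qed

locale path_extension =
  fixes M :: "'a measure" and J :: "'i set" and n m :: 'i and K :: "'a \<Rightarrow> 'a measure"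
    and P :: "('i \<Rightarrow> 'a) measure"
  assumes K: "K \<in> M \<rightarrow>\<^sub>M prob_algebra M" and n: "n \<in> J" and m: "m \<notin> J"
    and prob_space_P: "prob_space P" and sets_P: "sets P = sets (PiM J (\<lambda>_. M))"
begin

abbreviation extend_path :: "('i \<Rightarrow> 'a) \<Rightarrow> ('i \<Rightarrow> 'a) measure" where
  "extend_path \<omega> \<equiv> distr (K (\<omega> n)) (PiM (insert m J) (\<lambda>_. M)) (\<lambda>y. fun_upd \<omega> m y)"

lemma measurable_extend_path:
  "extend_path \<in> PiM J (\<lambda>_. M) \<rightarrow>\<^sub>M prob_algebra (PiM (insert m J) (\<lambda>_. M))"
proof (rule measurable_distr_prob_space2[where M=M])
  show "(\<lambda>\<omega>. K (\<omega> n)) \<in> PiM J (\<lambda>_. M) \<rightarrow>\<^sub>M prob_algebra M"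
    using measurable_component_singleton[OF n] K by (rule measurable_compose)
  have "(\<lambda>p. fun_upd (fst p) m (snd p)) \<in> PiM J (\<lambda>_. M) \<Otimes>\<^sub>M M \<rightarrow>\<^sub>M PiM (insert m J) (\<lambda>_. M)"
    by (rule measurable_fun_upd) auto
  then show "(\<lambda>(\<omega>, y). fun_upd \<omega> m y) \<in> PiM J (\<lambda>_. M) \<Otimes>\<^sub>M M \<rightarrow>\<^sub>M PiM (insert m J) (\<lambda>_. M)"
    by (simp add: split_beta')
qed

lemma
  shows prob_space_bind_extend_path: "prob_space (P \<bind> extend_path)"
    and sets_bind_extend_path: "sets (P \<bind> extend_path) = sets (PiM (insert m J) (\<lambda>_. M))"
proof -
  have P: "P \<in> space (prob_algebra (PiM J (\<lambda>_. M)))"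
    using prob_space_P sets_P by (simp add: space_prob_algebra)
  show "prob_space (P \<bind> extend_path)"
    by (rule prob_space_bind'[OF P measurable_extend_path])
  show "sets (P \<bind> extend_path) = sets (PiM (insert m J) (\<lambda>_. M))"
    by (rule sets_bind'[OF P measurable_extend_path])
qed

lemma space_P: "space P = space (PiM J (\<lambda>_. M))"
  using sets_P by (rule sets_eq_imp_space_eq)

lemma kernel_in_prob_algebra: "\<omega> \<in> space P \<Longrightarrow> K (\<omega> n) \<in> space (prob_algebra M)"
  using measurable_space[OF K] n by (auto simp: space_P space_PiM)

lemma distr_bind_extend_path:
  assumes "k \<in> insert m J"
  shows "distr (P \<bind> extend_path) M (\<lambda>\<omega>. \<omega> k) = P \<bind> (\<lambda>\<omega>. distr (K (\<omega> n)) M (\<lambda>y. fun_upd \<omega> m y k))"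
proof -
  have "distr (P \<bind> extend_path) M (\<lambda>\<omega>. \<omega> k) = P \<bind> (\<lambda>\<omega>. distr (extend_path \<omega>) M (\<lambda>\<omega>. \<omega> k))"
    using measurable_prob_algebraD[OF measurable_extend_path] assms
    by (intro distr_bind) (auto simp: prob_space.not_empty[OF prob_space_P] measurable_cong_sets[OF sets_P refl])
  also have "\<dots> = P \<bind> (\<lambda>\<omega>. distr (K (\<omega> n)) M (\<lambda>y. fun_upd \<omega> m y k))"
  proof (rule bind_cong_All, intro ballI)
    fix \<omega> assume \<omega>: "\<omega> \<in> space P"
    then show "distr (extend_path \<omega>) M (\<lambda>\<omega>. \<omega> k) = distr (K (\<omega> n)) M (\<lambda>y. fun_upd \<omega> m y k)"
      using kernel_in_prob_algebra[OF \<omega>] measurable_component_update[OF \<omega>[unfolded space_P] m] assms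
      by (subst distr_distr) (auto simp: comp_def space_prob_algebra cong: measurable_cong_sets)
  qed
  finally show ?thesis .
qed

lemma distr_bind_extend_path_old:
  assumes k: "k \<in> J"
  shows "distr (P \<bind> extend_path) M (\<lambda>\<omega>. \<omega> k) = distr P M (\<lambda>\<omega>. \<omega> k)"
proof -
  have "k \<noteq> m"
    using k m by auto
  have "P \<bind> (\<lambda>\<omega>. distr (K (\<omega> n)) M (\<lambda>y. fun_upd \<omega> m y k)) = P \<bind> (\<lambda>\<omega>. return M (\<omega> k))"
  proof (rule bind_cong_All, intro ballI)
    fix \<omega> assume \<omega>: "\<omega> \<in> space P"
    then have "\<omega> k \<in> space M"
      using k by (auto simp: space_P space_PiM)
    with kernel_in_prob_algebra[OF \<omega>] \<open>k \<noteq> m\<close>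
    show "distr (K (\<omega> n)) M (\<lambda>y. fun_upd \<omega> m y k) = return M (\<omega> k)"
      by (simp add: space_prob_algebra prob_space.distr_const)
  qed
  also have "\<dots> = distr P M (\<lambda>\<omega>. \<omega> k)"
    using k by (intro bind_return_distr')
      (auto simp: prob_space.not_empty[OF prob_space_P] measurable_cong_sets[OF sets_P refl])
  finally show ?thesis
    using k by (simp add: distr_bind_extend_path)
qed

lemma distr_bind_extend_path_new:
  "distr (P \<bind> extend_path) M (\<lambda>\<omega>. \<omega> m) = distr P M (\<lambda>\<omega>. \<omega> n) \<bind> K"
proof -
  have "P \<bind> (\<lambda>\<omega>. distr (K (\<omega> n)) M (\<lambda>y. fun_upd \<omega> m y m)) = P \<bind> (\<lambda>\<omega>. K (\<omega> n))"
    using kernel_in_prob_algebra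
    by (intro bind_cong_All ballI) (simp add: space_prob_algebra distr_id2)
  also have "\<dots> = distr P M (\<lambda>\<omega>. \<omega> n) \<bind> K"
    using n measurable_prob_algebraD[OF K]
    by (intro bind_distr[symmetric])
      (auto simp: prob_space.not_empty[OF prob_space_P] measurable_cong_sets[OF sets_P refl])
  finally show ?thesis
    by (simp add: distr_bind_extend_path)
qed

end

definition std_normal :: "real measure" where
  "std_normal = normal1 0 1"

lemma prob_space_std_normal: "prob_space std_normal"
  by (simp add: std_normal_def normal1_def prob_space_normal_density)

lemma sets_std_normal [measurable_cong, simp]: "sets std_normal = sets borel"
  by (simp add: std_normal_def normal1_def)

lemma space_std_normal [simp]: "space std_normal = UNIV"
  by (simp add: std_normal_def normal1_def)

lemma prob_space_normal1: "0 \<le> s \<Longrightarrow> prob_space (normal1 m s)"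
  by (auto simp: normal1_def intro: prob_space_normal_density prob_space_return)

lemma sets_normal1 [measurable_cong, simp]: "sets (normal1 m s) = sets borel"
  by (simp add: normal1_def)

lemma space_normal1 [simp]: "space (normal1 m s) = UNIV"
  by (simp add: normal1_def)

lemma distributed_normal_density_iff:
  assumes "0 < s" and "X \<in> borel_measurable M"
  shows "distributed M lborel X (normal_density m s) \<longleftrightarrow> distr M borel X = normal1 m s"
proof -
  have "distr M lborel X = distr M borel X"
    by (rule distr_cong) auto
  with assms show ?thesis
    by (auto simp: distributed_def normal1_def)
qed

lemma distr_std_normal_affine: "distr std_normal borel (\<lambda>z. m + a * z) = normal1 m \<bar>a\<bar>"
proof -
  interpret prob_space std_normal by (rule prob_space_std_normal)
  show ?thesis
  proof (cases "a = 0")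
    case True
    then show ?thesis by (simp add: normal1_def)
  next
    case False
    have "distributed std_normal lborel (\<lambda>z. z) std_normal_density"
      by (simp add: distributed_normal_density_iff distr_id2 std_normal_def)
    from normal_density_affine[OF this _ False, of m] False show ?thesis
      by (simp add: distributed_normal_density_iff)
  qed
qed

lemma normal1_eq_distr_std_normal:
  "0 \<le> s \<Longrightarrow> normal1 m s = distr std_normal borel (\<lambda>z. m + s * z)"
  by (simp add: distr_std_normal_affine)

lemma measurable_normal1 [measurable]:
  assumes [measurable]: "f \<in> borel_measurable M" and "0 \<le> s"
  shows "(\<lambda>x. normal1 (f x) s) \<in> M \<rightarrow>\<^sub>M prob_algebra borel"
proof -
  have "(\<lambda>x. distr std_normal borel (\<lambda>z. f x + s * z)) \<in> M \<rightarrow>\<^sub>M prob_algebra borel"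
    by (rule measurable_distr_prob_space2[where M=std_normal])
       (auto intro!: measurable_const simp: space_prob_algebra prob_space_std_normal)
  with \<open>0 \<le> s\<close> show ?thesis
    by (simp add: normal1_eq_distr_std_normal)
qed

lemma distr_std_normal_pair_lincomb:
  "distr (std_normal \<Otimes>\<^sub>M std_normal) borel (\<lambda>p. m + a * fst p + b * snd p)
     = normal1 m (sqrt (a\<^sup>2 + b\<^sup>2))"
proof -
  interpret std_normal: prob_space std_normal by (rule prob_space_std_normal)
  interpret pair_prob_space std_normal std_normal by unfold_locales
  have fst: "distr (std_normal \<Otimes>\<^sub>M std_normal) borel (\<lambda>p. g (fst p)) = distr std_normal borel g"
    if [measurable]: "g \<in> borel_measurable borel" for g :: "real \<Rightarrow> real"
    by (subst std_normal.distr_pair_fst[symmetric]) (simp add: distr_distr comp_def)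
  have snd: "distr (std_normal \<Otimes>\<^sub>M std_normal) borel (\<lambda>p. g (snd p)) = distr std_normal borel g"
    if [measurable]: "g \<in> borel_measurable borel" for g :: "real \<Rightarrow> real"
    by (subst distr_pair_snd[symmetric]) (simp add: distr_distr comp_def)
  consider "a = 0" | "b = 0" | "a \<noteq> 0" "b \<noteq> 0"
    by blast
  then show ?thesis
  proof cases
    case 1
    then show ?thesis
      using snd[of "\<lambda>z. m + b * z"] by (simp add: distr_std_normal_affine)
  next
    case 2
    then show ?thesis
      using fst[of "\<lambda>z. m + a * z"] by (simp add: distr_std_normal_affine)
  next
    case 3
    have "indep_var borel ((\<lambda>z. a * z) \<circ> fst) borel ((\<lambda>z. m + b * z) \<circ> snd)"
      by (rule indep_var_compose[OF indep_var_fst_snd[OF prob_space_std_normal prob_space_std_normal]]) auto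
    moreover have "distributed (std_normal \<Otimes>\<^sub>M std_normal) lborel (\<lambda>p. a * fst p) (normal_density 0 \<bar>a\<bar>)"
      using 3 fst[of "\<lambda>z. a * z"] distr_std_normal_affine[of 0 a] by (simp add: distributed_normal_density_iff)
    moreover have "distributed (std_normal \<Otimes>\<^sub>M std_normal) lborel (\<lambda>p. m + b * snd p) (normal_density m \<bar>b\<bar>)"
      using 3 snd[of "\<lambda>z. m + b * z"] by (simp add: distributed_normal_density_iff distr_std_normal_affine)
    ultimately have "distributed (std_normal \<Otimes>\<^sub>M std_normal) lborel (\<lambda>p. a * fst p + (m + b * snd p))
        (normal_density (0 + m) (sqrt (\<bar>a\<bar>\<^sup>2 + \<bar>b\<bar>\<^sup>2)))"
      using 3 by (intro add_indep_normal) (auto simp: comp_def)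
    moreover have "0 < sqrt (a\<^sup>2 + b\<^sup>2)"
      using 3 by (simp add: sum_power2_gt_zero_iff)
    ultimately show ?thesis
      by (simp add: distributed_normal_density_iff add_ac)
  qed
qed

lemma normal1_bind_linear:
  assumes t: "0 \<le> t" and s: "0 \<le> s"
  shows "normal1 m t \<bind> (\<lambda>y. normal1 (a + c * y) s) = normal1 (a + c * m) (sqrt ((c * t)\<^sup>2 + s\<^sup>2))"
proof -
  interpret std_normal: prob_space std_normal by (rule prob_space_std_normal)
  interpret pair_prob_space std_normal std_normal by unfold_locales
  have "normal1 m t \<bind> (\<lambda>y. normal1 (a + c * y) s) = std_normal \<bind> (\<lambda>z. normal1 (a + c * (m + t * z)) s)"
    unfolding normal1_eq_distr_std_normal[OF t]
    by (rule bind_distr) (auto intro!: measurable_prob_algebraD measurable_normal1 s)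
  also have "\<dots> = std_normal \<bind> (\<lambda>z. distr std_normal borel (\<lambda>w. (a + c * m) + c * t * z + s * w))"
    by (simp add: normal1_eq_distr_std_normal[OF s] algebra_simps)
  also have "\<dots> = distr (std_normal \<Otimes>\<^sub>M std_normal) borel (\<lambda>p. (a + c * m) + c * t * fst p + s * snd p)"
    by (subst distr_pair_measure_eq_bind) simp_all
  also have "\<dots> = normal1 (a + c * m) (sqrt ((c * t)\<^sup>2 + s\<^sup>2))"
    by (rule distr_std_normal_pair_lincomb)
  finally show ?thesis .
qed

lemma sets_gauss [measurable_cong, simp]: "sets (gauss mu s) = sets vec_space"
  unfolding gauss_def vec_space_def by (rule sets_PiM_cong) auto

lemma space_vec_space [simp]: "space vec_space = UNIV"
  by (simp add: vec_space_def space_PiM)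

lemma prob_space_gauss: "0 \<le> s \<Longrightarrow> prob_space (gauss mu s)"
  unfolding gauss_def by (intro prob_space_PiM prob_space_normal1)

lemma measurable_gauss_linear:
  assumes "0 \<le> s"
  shows "(\<lambda>x. gauss (\<lambda>i. a i + c * x i) s) \<in> vec_space \<rightarrow>\<^sub>M prob_algebra vec_space"
  unfolding gauss_def vec_space_def
  by (rule measurable_PiM_kernel[where K="\<lambda>i y. normal1 (a i + c * y) s"]) (simp add: assms)

lemma gauss_bind_linear:
  assumes "0 \<le> t" and "0 \<le> s"
  shows "gauss mu t \<bind> (\<lambda>x. gauss (\<lambda>i. a i + c * x i) s) = gauss (\<lambda>i. a i + c * mu i) (sqrt ((c * t)\<^sup>2 + s\<^sup>2))"
  unfolding gauss_def
  by (subst bind_PiM_kernel[where K="\<lambda>i y. normal1 (a i + c * y) s" and N="\<lambda>_. borel"])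
     (simp_all add: assms prob_space_normal1 normal1_bind_linear)

lemma step_kernel_eq_gauss_linear:
  "step_kernel x0 eta xi tau n =
     (\<lambda>x. gauss (\<lambda>i. (1 + c) * x0 i + - c * x i) (eta * tau (n - 1)))"
  if "c = xi * sqrt (1 - eta\<^sup>2) * tau (n - 1) / tau n"
  unfolding step_kernel_def that by (simp add: fun_eq_iff diff_divide_distrib algebra_simps)

lemma measurable_step_kernel:
  "0 \<le> eta * tau (n - 1) \<Longrightarrow> step_kernel x0 eta xi tau n \<in> vec_space \<rightarrow>\<^sub>M prob_algebra vec_space"
  unfolding step_kernel_eq_gauss_linear[OF refl] by (rule measurable_gauss_linear)

lemma gauss_bind_step_kernel:
  assumes "0 < tau n" and "0 \<le> tau (n - 1)" and "0 \<le> eta" and "eta \<le> 1" and "xi\<^sup>2 = 1"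
  shows "gauss x0 (tau n) \<bind> step_kernel x0 eta xi tau n = gauss x0 (tau (n - 1))"
proof -
  define c where "c = xi * sqrt (1 - eta\<^sup>2) * tau (n - 1) / tau n"
  have "1 - eta\<^sup>2 \<ge> 0"
    using assms(3,4) by (simp add: abs_square_le_1)
  then have "(c * tau n)\<^sup>2 + (eta * tau (n - 1))\<^sup>2 = (tau (n - 1))\<^sup>2"
    using assms(1,5) by (simp add: c_def power_mult_distrib field_simps)
  then have variance: "sqrt ((- c * tau n)\<^sup>2 + (eta * tau (n - 1))\<^sup>2) = tau (n - 1)"
    using assms(2) by simp
  have "gauss x0 (tau n) \<bind> step_kernel x0 eta xi tau n
      = gauss (\<lambda>i. (1 + c) * x0 i + - c * x0 i) (sqrt ((- c * tau n)\<^sup>2 + (eta * tau (n - 1))\<^sup>2))"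
    unfolding step_kernel_eq_gauss_linear[OF c_def] using assms by (intro gauss_bind_linear) auto
  also have "\<dots> = gauss x0 (tau (n - 1))"
    unfolding variance by (simp add: algebra_simps)
  finally show ?thesis .
qed

lemma partial_joint_base:
  fixes x0 :: "'d::finite \<Rightarrow> real"
  assumes "0 \<le> tau N"
  shows "prob_space (partial_joint x0 eta xi tau N 0)"
    and "sets (partial_joint x0 eta xi tau N 0) = sets (path_space {N..N})"
    and "distr (partial_joint x0 eta xi tau N 0) vec_space (\<lambda>\<omega>. \<omega> N) = gauss x0 (tau N)"
proof -
  interpret prob_space "gauss x0 (tau N)"
    using assms by (rule prob_space_gauss)
  have embed: "(\<lambda>y n. if n = N then y else undefined) \<in> gauss x0 (tau N) \<rightarrow>\<^sub>M path_space {N..N}"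
    unfolding path_space_def
    by (rule measurable_PiM_single') (auto simp: space_PiM cong: measurable_cong_sets)
  then show "prob_space (partial_joint x0 eta xi tau N 0)"
    and "sets (partial_joint x0 eta xi tau N 0) = sets (path_space {N..N})"
    by (simp_all add: prob_space_distr)
  have "distr (partial_joint x0 eta xi tau N 0) vec_space (\<lambda>\<omega>. \<omega> N) = distr (gauss x0 (tau N)) vec_space (\<lambda>y. y)"
    using embed by (simp add: distr_distr comp_def path_space_def)
  also have "\<dots> = gauss x0 (tau N)"
    by (simp add: distr_id2)
  finally show "distr (partial_joint x0 eta xi tau N 0) vec_space (\<lambda>\<omega>. \<omega> N) = gauss x0 (tau N)" .
qed

lemma partial_joint_marginals:
  fixes x0 :: "'d::finite \<Rightarrow> real"
  assumes tau: "\<forall>n\<in>{1..N}. 0 < tau n" and eta: "0 \<le> eta" "eta \<le> 1" and xi: "xi\<^sup>2 = 1"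
  shows "j < N \<Longrightarrow> prob_space (partial_joint x0 eta xi tau N j)
    \<and> sets (partial_joint x0 eta xi tau N j) = sets (path_space {N - j..N})
    \<and> (\<forall>k\<in>{N - j..N}. distr (partial_joint x0 eta xi tau N j) vec_space (\<lambda>\<omega>. \<omega> k) = gauss x0 (tau k))"
proof (induction j)
  case 0
  then have "0 < tau N"
    using tau by simp
  then show ?case
    using partial_joint_base[of tau N x0 eta xi] by simp
next
  case (Suc j)
  have J: "N - j \<in> {N - j..N}" "N - Suc j \<notin> {N - j..N}"
    and path: "{N - Suc j..N} = insert (N - Suc j) {N - j..N}"
    using Suc.prems by auto
  have tau_n: "0 < tau (N - j)" "0 < tau (N - j - 1)"
    using tau Suc.prems by auto
  have K: "step_kernel x0 eta xi tau (N - j) \<in> vec_space \<rightarrow>\<^sub>M prob_algebra vec_space"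
    using eta tau_n by (intro measurable_step_kernel) simp
  from Suc obtain prob: "prob_space (partial_joint x0 eta xi tau N j)"
    and sets: "sets (partial_joint x0 eta xi tau N j) = sets (PiM {N - j..N} (\<lambda>_. vec_space))"
    and marginals: "\<And>k. k \<in> {N - j..N} \<Longrightarrow>
      distr (partial_joint x0 eta xi tau N j) vec_space (\<lambda>\<omega>. \<omega> k) = gauss x0 (tau k)"
    by (auto simp: path_space_def)
  interpret path_extension vec_space "{N - j..N}" "N - j" "N - Suc j" "step_kernel x0 eta xi tau (N - j)"
    "partial_joint x0 eta xi tau N j"
    using K J prob sets by (simp add: path_extension_def)
  have joint: "partial_joint x0 eta xi tau N (Suc j) = partial_joint x0 eta xi tau N j \<bind> extend_path"
    by (simp add: path path_space_def)
  have "gauss x0 (tau (N - j)) \<bind> step_kernel x0 eta xi tau (N - j) = gauss x0 (tau (N - j - 1))"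
    using tau_n eta xi by (intro gauss_bind_step_kernel) auto
  then have new: "distr (partial_joint x0 eta xi tau N j \<bind> extend_path) vec_space (\<lambda>\<omega>. \<omega> (N - Suc j))
      = gauss x0 (tau (N - Suc j))"
    using distr_bind_extend_path_new marginals[OF J(1)] by simp
  have old: "distr (partial_joint x0 eta xi tau N j \<bind> extend_path) vec_space (\<lambda>\<omega>. \<omega> k) = gauss x0 (tau k)"
    if "k \<in> {N - j..N}" for k
    using distr_bind_extend_path_old[OF that] marginals[OF that] by simp
  show ?case
    unfolding joint using prob_space_bind_extend_path sets_bind_extend_path new old
    by (simp add: path path_space_def)
qed

theorem proposition1:
  fixes x0 :: "'d::finite \<Rightarrow> real" and tau :: "nat \<Rightarrow> real"
    and N :: nat and eta xi :: real
  assumes "N \<ge> 1"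
    and "\<forall>n\<in>{1..N}. tau n > 0"
    and "\<forall>m n. 1 \<le> m \<and> m < n \<and> n \<le> N \<longrightarrow> tau m < tau n"
    and "0 \<le> eta" and "eta \<le> 1"
    and "xi \<in> {-1, 1}"
  shows "\<forall>n\<in>{1..N}. marginal x0 eta xi tau N n = gauss x0 (tau n)"
proof -
  have "xi\<^sup>2 = 1"
    using assms(6) by auto
  moreover have "N - 1 < N"
    using assms(1) by simp
  ultimately have "\<forall>k\<in>{N - (N - 1)..N}. distr (joint x0 eta xi tau N) vec_space (\<lambda>\<omega>. \<omega> k) = gauss x0 (tau k)"
    unfolding joint_def using partial_joint_marginals[OF assms(2,4,5)] by blast
  moreover have "N - (N - 1) = 1"
    using assms(1) by simp
  ultimately show ?thesis
    by (simp add: marginal_def)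
qed

end
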